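(* Let $d,N\in\mathbb{N}$, $a_1,\dots,a_N\in\mathbb{R}^d$ and $b_1,\dots,b_N,c_1,\dots,c_N,\beta\in\mathbb{R}$ be fixed, and define $\Phi(x)=\sum_{i=1}^N c_i\,\mathrm{ReLU}(\langle a_i,x\rangle+b_i)+\beta$ and $\widetilde{\Phi}(x)=\sum_{i=1}^N c_i(\langle a_i,x\rangle+b_i)+\beta$ for $x\in\mathbb{R}^d$. Then $\mathrm{Lip}(\Phi)\ge\frac12\mathrm{Lip}(\widetilde{\Phi})$.
   Context: $\mathrm{ReLU}(t)=\max\{0,t\}$; $\mathrm{Lip}(f)=\sup_{x\neq y}|f(x)-f(y)|/\|x-y\|_2$. *)

theory Defs
  imports "HOL-Analysis.Analysis"
begin

definition ReLU :: "real \<Rightarrow> real" where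
  "ReLU t = max 0 t"

definition Lip :: "('a::real_normed_vector \<Rightarrow> real) \<Rightarrow> ereal" where
  "Lip f = (SUP p \<in> {p. fst p \<noteq> snd p}. ereal (\<bar>f (fst p) - f (snd p)\<bar> / norm (fst p - snd p)))"

end

theory Submission
  imports Defs
begin

(* Since ReLU t - ReLU (-t) = t, the odd part Phi x - Phi (-x) of the network equals the
   linear part <w, x> of Phi, w = sum_i c_i a_i, up to an error bounded independently of x.
   Comparing Phi at t w and -t w for large t therefore gives difference quotients approaching
   |w|/2, whereas the affine map obtained by deleting the ReLUs has Lipschitz constant at
   most |w|. *)

lemma ReLU_odd_part_bound: "\<bar>ReLU (s + b) - ReLU (- s + b) - s\<bar> \<le> 2 * \<bar>b\<bar>"
  unfolding ReLU_def by (auto simp: max_def)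

lemma difference_quotient_le_Lip:
  assumes "x \<noteq> y"
  shows "ereal (\<bar>f x - f y\<bar> / norm (x - y)) \<le> Lip f"
  unfolding Lip_def by (rule SUP_upper2[where i="(x, y)"]) (use assms in auto)

lemma Lip_le:
  assumes "\<And>x y. \<bar>f x - f y\<bar> \<le> L * norm (x - y)"
  shows "Lip f \<le> ereal L"
  unfolding Lip_def
proof (rule SUP_least)
  fix p :: "'a \<times> 'a"
  assume "p \<in> {p. fst p \<noteq> snd p}"
  then have "norm (fst p - snd p) > 0" by simp
  with assms show "ereal (\<bar>f (fst p) - f (snd p)\<bar> / norm (fst p - snd p)) \<le> ereal L"
    by (simp add: divide_le_eq)
qed

lemma Lip_ge:
  assumes "\<And>r. r < L \<Longrightarrow> \<exists>x y. x \<noteq> y \<and> r \<le> \<bar>f x - f y\<bar> / norm (x - y)"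
  shows "ereal L \<le> Lip f"
proof (rule dense_le)
  fix y
  assume y: "y < ereal L"
  show "y \<le> Lip f"
  proof (cases y)
    case (real r)
    with y have "r < L" by simp
    then obtain x x' where "x \<noteq> x'" "r \<le> \<bar>f x - f x'\<bar> / norm (x - x')"
      using assms by blast
    with real show ?thesis
      using difference_quotient_le_Lip[of x x' f] by (metis ereal_less_eq(3) order_trans)
  qed (use y in auto)
qed

lemma Lip_nonneg:
  fixes f :: "'a::euclidean_space \<Rightarrow> real"
  shows "0 \<le> Lip f"
proof -
  obtain e :: 'a where "e \<noteq> 0"
    using nonzero_Basis nonempty_Basis by blast
  then show ?thesis
    using difference_quotient_le_Lip[of e 0 f] by (metis abs_ge_zero divide_nonneg_nonneg
        ereal_less_eq(3) norm_ge_zero order_trans zero_ereal_def)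
qed

lemma Lip_le_norm_of_linear_increments:
  assumes "\<And>x y. f x - f y = inner w (x - y)"
  shows "Lip f \<le> ereal (norm w)"
  by (rule Lip_le) (simp add: assms Cauchy_Schwarz_ineq2)

lemma Lip_ge_half_norm_of_bounded_odd_part:
  fixes f :: "'a::euclidean_space \<Rightarrow> real"
  assumes odd_part: "\<And>x. \<bar>f x - f (- x) - inner w x\<bar> \<le> K"
  shows "ereal (norm w / 2) \<le> Lip f"
proof (cases "w = 0")
  case True
  then show ?thesis using Lip_nonneg[of f] by (simp add: zero_ereal_def)
next
  case False
  then have nw: "norm w > 0" by simp
  have K: "K \<ge> 0" using odd_part[of 0] by simp
  show ?thesis
  proof (rule Lip_ge)
    fix r
    assume r: "r < norm w / 2"
    define t where "t = (K + 1) / (norm w * (norm w - 2 * r))"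
    have gap: "norm w * (norm w - 2 * r) > 0" using r nw by simp
    then have t: "t > 0" unfolding t_def using K by simp
    have tK: "t * (norm w * (norm w - 2 * r)) = K + 1"
      unfolding t_def using gap by (metis less_irrefl nonzero_divide_eq_eq)
    have dist: "norm (t *\<^sub>R w - - (t *\<^sub>R w)) = 2 * t * norm w"
      using t by (simp flip: scaleR_2)
    have "r * (2 * t * norm w) \<le> t * norm w ^ 2 - K"
      using tK by (simp add: power2_eq_square algebra_simps)
    also have "\<dots> \<le> \<bar>f (t *\<^sub>R w) - f (- (t *\<^sub>R w))\<bar>"
      using odd_part[of "t *\<^sub>R w"] by (simp add: power2_norm_eq_inner)
    finally have "r \<le> \<bar>f (t *\<^sub>R w) - f (- (t *\<^sub>R w))\<bar> / norm (t *\<^sub>R w - - (t *\<^sub>R w))"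
      unfolding dist using t nw by (simp add: le_divide_eq)
    moreover have "t *\<^sub>R w \<noteq> - (t *\<^sub>R w)"
      using dist t nw by (metis diff_self mult_pos_pos norm_zero zero_less_numeral less_irrefl)
    ultimately show "\<exists>x y. x \<noteq> y \<and> r \<le> \<bar>f x - f y\<bar> / norm (x - y)" by blast
  qed
qed

lemma ReLU_network_odd_part_bound:
  "\<bar>((\<Sum>i<N. c i * ReLU (inner (a i) x + b i)) + \<beta>)
     - ((\<Sum>i<N. c i * ReLU (inner (a i) (- x) + b i)) + \<beta>)
     - inner (\<Sum>i<N. c i *\<^sub>R a i) x\<bar>
   \<le> (\<Sum>i<N. \<bar>c i\<bar> * (2 * \<bar>b i\<bar>))"
proof -
  have "\<bar>((\<Sum>i<N. c i * ReLU (inner (a i) x + b i)) + \<beta>)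
          - ((\<Sum>i<N. c i * ReLU (inner (a i) (- x) + b i)) + \<beta>)
          - inner (\<Sum>i<N. c i *\<^sub>R a i) x\<bar>
        = \<bar>\<Sum>i<N. c i * (ReLU (inner (a i) x + b i) - ReLU (- inner (a i) x + b i) - inner (a i) x)\<bar>"
    by (simp add: inner_sum_left sum_subtractf[symmetric] algebra_simps)
  also have "\<dots> \<le> (\<Sum>i<N. \<bar>c i\<bar> * \<bar>ReLU (inner (a i) x + b i) - ReLU (- inner (a i) x + b i) - inner (a i) x\<bar>)"
    by (rule order_trans[OF sum_abs]) (simp add: abs_mult)
  also have "\<dots> \<le> (\<Sum>i<N. \<bar>c i\<bar> * (2 * \<bar>b i\<bar>))"
    by (intro sum_mono mult_left_mono ReLU_odd_part_bound abs_ge_zero)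
  finally show ?thesis .
qed

theorem proposition4p8:
  fixes N :: nat
    and a :: "nat \<Rightarrow> 'd::euclidean_space"
    and b c :: "nat \<Rightarrow> real"
    and \<beta> :: real
  shows "Lip (\<lambda>x. (\<Sum>i<N. c i * ReLU (inner (a i) x + b i)) + \<beta>)
           \<ge> ereal (1/2) * Lip (\<lambda>x. (\<Sum>i<N. c i * (inner (a i) x + b i)) + \<beta>)"
proof -
  define w where "w = (\<Sum>i<N. c i *\<^sub>R a i)"
  have "Lip (\<lambda>x::'d. (\<Sum>i<N. c i * (inner (a i) x + b i)) + \<beta>) \<le> ereal (norm w)"
    unfolding w_def
    by (rule Lip_le_norm_of_linear_increments)
      (simp add: inner_sum_left inner_diff_right sum_subtractf[symmetric] algebra_simps)
  then have "ereal (1/2) * Lip (\<lambda>x. (\<Sum>i<N. c i * (inner (a i) x + b i)) + \<beta>)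
             \<le> ereal (norm w / 2)"
    using ereal_mult_left_mono[of _ _ "ereal (1/2)"] by fastforce
  also have "\<dots> \<le> Lip (\<lambda>x. (\<Sum>i<N. c i * ReLU (inner (a i) x + b i)) + \<beta>)"
    unfolding w_def
    by (rule Lip_ge_half_norm_of_bounded_odd_part) (rule ReLU_network_odd_part_bound)
  finally show ?thesis .
qed

end
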